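(* Let $G\in\mathcal{G}_{k,n,p}$ and $v\neq w\in V(G)$. Then $|H_{wv}-n|\lesssim (pn)^k$.
   Context: Fix an integer $k\ge2$ and let $p=p(n)$ satisfy $\frac{\log n}{n^{(k-1)/k}}\le p\le 1-\Omega(\frac{\log^4 n}{n})$. $\mathcal{G}_{k,n,p}$ denotes the set of graphs $G$ on $n$ vertices satisfying: (i) $G$ is not bipartite; (ii) $\operatorname{diam}(G)\le k$; (iii) every vertex has degree $d(v)=pn\pm\mathcal{O}(\sqrt{pn\log n})$; (iv) $2|E(G)|=pn^2\pm\mathcal{O}(\sqrt{pn^2\log n})$; (v) $|N(v)\cap N(w)|=p^2n\pm\mathcal{O}(\max\{\sqrt{p^2n\log n},\log n\})$ for all $v\ne w$; (vi) the unit eigenvector $\phi$ of the largest adjacency eigenvalue has entries $\phi_i=\frac1{\sqrt n}\pm\mathcal{O}(\frac{\log^{3/2}n}{\sqrt p\,n\log(pn)})$; (vii) $\lambda_1=(1+o(1))pn$; (viii) $\max\{|\lambda_2|,|\lambda_n|\}=\mathcal{O}(\sqrt{pn})$, where $\lambda_1\ge\dots\ge\lambda_n$ are the adjacency eigenvalues. Asymptotic notation is as $n\to\infty$ with constants independent of $n$; $f\lesssim g$ means $f=\mathcal{O}(g)$. $H_{wv}$ is the expected first hitting time of $v$ for a simple random walk on $G$ started at $w$. *)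

theory Defs
  imports Complex_Main "Jordan_Normal_Form.Char_Poly"
begin

definition simple_graph :: "nat \<Rightarrow> (nat \<Rightarrow> nat \<Rightarrow> bool) \<Rightarrow> bool" where
  "simple_graph n E \<longleftrightarrow> (\<forall>u v. E u v \<longrightarrow> u < n \<and> v < n \<and> u \<noteq> v \<and> E v u)"

definition nbrs :: "nat \<Rightarrow> (nat \<Rightarrow> nat \<Rightarrow> bool) \<Rightarrow> nat \<Rightarrow> nat set" where
  "nbrs n E v = {u. u < n \<and> E v u}"

definition deg :: "nat \<Rightarrow> (nat \<Rightarrow> nat \<Rightarrow> bool) \<Rightarrow> nat \<Rightarrow> nat" where
  "deg n E v = card (nbrs n E v)"

definition num_edges :: "nat \<Rightarrow> (nat \<Rightarrow> nat \<Rightarrow> bool) \<Rightarrow> nat" where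
  "num_edges n E = card {(u, v). u < v \<and> v < n \<and> E u v}"

definition bipartite :: "nat \<Rightarrow> (nat \<Rightarrow> nat \<Rightarrow> bool) \<Rightarrow> bool" where
  "bipartite n E \<longleftrightarrow> (\<exists>S. \<forall>u<n. \<forall>v<n. E u v \<longrightarrow> (u \<in> S \<longleftrightarrow> v \<notin> S))"

fun within_dist :: "nat \<Rightarrow> (nat \<Rightarrow> nat \<Rightarrow> bool) \<Rightarrow> nat \<Rightarrow> nat \<Rightarrow> nat \<Rightarrow> bool" where
  "within_dist n E 0 u v = (u = v)"
| "within_dist n E (Suc j) u v =
     (within_dist n E j u v \<or> (\<exists>x<n. E u x \<and> within_dist n E j x v))"

definition diam_le :: "nat \<Rightarrow> (nat \<Rightarrow> nat \<Rightarrow> bool) \<Rightarrow> nat \<Rightarrow> bool" where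
  "diam_le n E k \<longleftrightarrow> (\<forall>u<n. \<forall>v<n. within_dist n E k u v)"

definition adj_mat :: "nat \<Rightarrow> (nat \<Rightarrow> nat \<Rightarrow> bool) \<Rightarrow> real mat" where
  "adj_mat n E = mat n n (\<lambda>(i, j). if E i j then 1 else 0)"

definition adj_eigenvalues :: "nat \<Rightarrow> (nat \<Rightarrow> nat \<Rightarrow> bool) \<Rightarrow> (nat \<Rightarrow> real) \<Rightarrow> bool" where
  "adj_eigenvalues n E lam \<longleftrightarrow>
     (\<forall>i j. 1 \<le> i \<longrightarrow> i \<le> j \<longrightarrow> j \<le> n \<longrightarrow> lam j \<le> lam i) \<and>
     char_poly (adj_mat n E) = (\<Prod>i=1..n. [:- lam i, 1:])"

text \<open>Simple random walk: hit_prob n E v t x = probability that the walk started at x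
  hits v for the first time at time t.\<close>
fun hit_prob :: "nat \<Rightarrow> (nat \<Rightarrow> nat \<Rightarrow> bool) \<Rightarrow> nat \<Rightarrow> nat \<Rightarrow> nat \<Rightarrow> real" where
  "hit_prob n E v 0 x = (if x = v then 1 else 0)"
| "hit_prob n E v (Suc t) x =
     (if x = v then 0
      else (\<Sum>y\<in>nbrs n E x. hit_prob n E v t y) / real (deg n E x))"

definition hitting_time :: "nat \<Rightarrow> (nat \<Rightarrow> nat \<Rightarrow> bool) \<Rightarrow> nat \<Rightarrow> nat \<Rightarrow> real" where
  "hitting_time n E w v = (\<Sum>t. real t * hit_prob n E v t w)"

text \<open>The class G_{k,n,p}; C is the (common) constant of all O-terms,
  eps n is the o(1) term in (vii).\<close>
definition graph_class ::
  "nat \<Rightarrow> nat \<Rightarrow> real \<Rightarrow> real \<Rightarrow> real \<Rightarrow> (nat \<Rightarrow> nat \<Rightarrow> bool) \<Rightarrow> bool" where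
  "graph_class k n p C eps E \<longleftrightarrow>
     simple_graph n E \<and>
     \<not> bipartite n E \<and>
     diam_le n E k \<and>
     (\<forall>v<n. \<bar>real (deg n E v) - p * n\<bar> \<le> C * sqrt (p * n * ln n)) \<and>
     \<bar>2 * real (num_edges n E) - p * n\<^sup>2\<bar> \<le> C * sqrt (p * n\<^sup>2 * ln n) \<and>
     (\<forall>v<n. \<forall>w<n. v \<noteq> w \<longrightarrow>
        \<bar>real (card (nbrs n E v \<inter> nbrs n E w)) - p\<^sup>2 * n\<bar>
          \<le> C * max (sqrt (p\<^sup>2 * n * ln n)) (ln n)) \<and>
     (\<exists>lam. adj_eigenvalues n E lam \<and>
        (\<exists>\<phi> \<in> carrier_vec n.
           adj_mat n E *\<^sub>v \<phi> = lam 1 \<cdot>\<^sub>v \<phi> \<and>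
           (\<Sum>i<n. (\<phi> $ i)\<^sup>2) = 1 \<and>
           (\<forall>i<n. \<bar>\<phi> $ i - 1 / sqrt n\<bar>
                    \<le> C * ln n powr (3/2) / (sqrt p * n * ln (p * n)))) \<and>
        \<bar>lam 1 / (p * n) - 1\<bar> \<le> eps \<and>
        max \<bar>lam 2\<bar> \<bar>lam n\<bar> \<le> C * sqrt (p * n))"

end

theory Submission
  imports Defs
begin

text \<open>The bound is crude but suffices: 0 \<le> H_wv \<le> k (2pn)^k, while the lower bound on p
  gives n \<le> (pn)^k. Since the diameter is at most k, from every vertex the walk reaches v
  within k steps with probability at least D^-k, D the maximum degree. Hence the probability
  of not having hit v decays geometrically over blocks of k steps, and H_wv, the sum of
  these probabilities, is at most k D^k.\<close>

lemma finite_nbrs: "finite (nbrs n E x)"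
  unfolding nbrs_def by simp

lemma hit_prob_nonneg: "0 \<le> hit_prob n E v t x"
  by (induction t arbitrary: x) (auto intro!: sum_nonneg divide_nonneg_nonneg)

definition hit_within :: "nat \<Rightarrow> (nat \<Rightarrow> nat \<Rightarrow> bool) \<Rightarrow> nat \<Rightarrow> nat \<Rightarrow> nat \<Rightarrow> real" where
  "hit_within n E v j x = (\<Sum>t\<le>j. hit_prob n E v t x)"

lemma hit_within_nonneg: "0 \<le> hit_within n E v j x"
  unfolding hit_within_def by (intro sum_nonneg hit_prob_nonneg)

lemma hit_within_Suc_eq:
  "hit_within n E v (Suc j) x = hit_within n E v j x + hit_prob n E v (Suc j) x"
  unfolding hit_within_def by simp

lemma hit_within_Suc:
  "hit_within n E v (Suc j) x =
     (if x = v then 1 else (\<Sum>y\<in>nbrs n E x. hit_within n E v j y) / real (deg n E x))"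
proof -
  have "hit_within n E v (Suc j) x = hit_prob n E v 0 x + (\<Sum>t\<le>j. hit_prob n E v (Suc t) x)"
    unfolding hit_within_def by (subst sum.atMost_Suc_shift) simp
  also have "(\<Sum>t\<le>j. hit_prob n E v (Suc t) x) =
      (if x = v then 0 else (\<Sum>y\<in>nbrs n E x. hit_within n E v j y) / real (deg n E x))"
    unfolding hit_within_def by (subst sum.swap) (simp add: sum_divide_distrib)
  finally show ?thesis by simp
qed

lemma hit_within_target: "hit_within n E v j v = 1"
  by (cases j) (simp add: hit_within_def, simp only: hit_within_Suc, simp)

lemma hit_within_le_1: "hit_within n E v j x \<le> 1"
proof (induction j arbitrary: x)
  case 0
  then show ?case by (simp add: hit_within_def)
next
  case (Suc j)
  have "(\<Sum>y\<in>nbrs n E x. hit_within n E v j y) \<le> real (deg n E x)"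
    using sum_mono[of "nbrs n E x", OF Suc.IH] by (simp add: deg_def)
  then show ?case
    by (cases "deg n E x = 0") (auto simp: hit_within_Suc divide_le_eq_1)
qed

lemma hit_within_ge:
  assumes "1 \<le> D" "\<forall>y<n. real (deg n E y) \<le> D"
    and "within_dist n E j x v" "x < n"
  shows "1 / D ^ j \<le> hit_within n E v j x"
  using assms(3,4)
proof (induction j arbitrary: x)
  case 0
  then show ?case by (simp add: hit_within_target)
next
  case (Suc j)
  show ?case
  proof (cases "within_dist n E j x v")
    case True
    have "1 / D ^ Suc j \<le> 1 / D ^ j"
      using assms(1) by (simp add: divide_simps)
    also have "\<dots> \<le> hit_within n E v j x"
      using Suc.IH[OF True Suc.prems(2)] .
    also have "\<dots> \<le> hit_within n E v (Suc j) x"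
      by (metis hit_within_Suc_eq hit_prob_nonneg le_add_same_cancel1)
    finally show ?thesis .
  next
    case False
    then obtain y where y: "y < n" "E x y" "within_dist n E j y v"
      using Suc.prems(1) by auto
    show ?thesis
    proof (cases "x = v")
      case True
      then show ?thesis
        using one_le_power[OF assms(1), of "Suc j"] by (simp add: hit_within_target)
    next
      case False
      have yx: "y \<in> nbrs n E x"
        using y by (simp add: nbrs_def)
      then have "0 < deg n E x"
        unfolding deg_def using finite_nbrs card_gt_0_iff by blast
      have "1 / D ^ Suc j = (1 / D ^ j) / D"
        by simp
      also have "\<dots> \<le> hit_within n E v j y / D"
        using Suc.IH[OF y(3,1)] assms(1) by (intro divide_right_mono) auto
      also have "\<dots> \<le> (\<Sum>z\<in>nbrs n E x. hit_within n E v j z) / D"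
        using yx assms(1) finite_nbrs
        by (intro divide_right_mono member_le_sum) (auto intro: hit_within_nonneg)
      also have "\<dots> \<le> (\<Sum>z\<in>nbrs n E x. hit_within n E v j z) / real (deg n E x)"
        using assms(2) Suc.prems(2) \<open>0 < deg n E x\<close>
        by (intro divide_left_mono sum_nonneg hit_within_nonneg) auto
      finally show ?thesis
        using False by (simp add: hit_within_Suc)
    qed
  qed
qed

definition miss_within :: "nat \<Rightarrow> (nat \<Rightarrow> nat \<Rightarrow> bool) \<Rightarrow> nat \<Rightarrow> nat \<Rightarrow> nat \<Rightarrow> real" where
  "miss_within n E v j x = 1 - hit_within n E v j x"

lemma miss_within_bounds: "0 \<le> miss_within n E v j x" "miss_within n E v j x \<le> 1"
  using hit_within_le_1 hit_within_nonneg by (auto simp: miss_within_def)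

lemma miss_within_target: "miss_within n E v j v = 0"
  by (simp add: miss_within_def hit_within_target)

lemma miss_within_Suc:
  assumes "x \<noteq> v" "0 < deg n E x"
  shows "miss_within n E v (Suc j) x = (\<Sum>y\<in>nbrs n E x. miss_within n E v j y) / real (deg n E x)"
proof -
  have "(\<Sum>y\<in>nbrs n E x. miss_within n E v j y) =
      real (deg n E x) - (\<Sum>y\<in>nbrs n E x. hit_within n E v j y)"
    by (simp add: miss_within_def sum_subtractf deg_def)
  then show ?thesis
    using assms by (simp add: miss_within_def hit_within_Suc diff_divide_distrib)
qed

lemma hit_prob_Suc_eq_miss_within_diff:
  "hit_prob n E v (Suc j) x = miss_within n E v j x - miss_within n E v (Suc j) x"
  by (simp add: miss_within_def hit_within_Suc_eq)

definition max_miss_within :: "nat \<Rightarrow> (nat \<Rightarrow> nat \<Rightarrow> bool) \<Rightarrow> nat \<Rightarrow> nat \<Rightarrow> real" where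
  "max_miss_within n E v j = Max (miss_within n E v j ` {..<n})"

lemma miss_within_le_max:
  "x < n \<Longrightarrow> miss_within n E v j x \<le> max_miss_within n E v j"
  unfolding max_miss_within_def by (intro Max_ge) auto

lemma max_miss_within_attained:
  "0 < n \<Longrightarrow> \<exists>x<n. max_miss_within n E v j = miss_within n E v j x"
proof -
  assume "0 < n"
  then have "max_miss_within n E v j \<in> miss_within n E v j ` {..<n}"
    unfolding max_miss_within_def by (intro Max_in) auto
  then show ?thesis by auto
qed

lemma max_miss_within_bounds:
  assumes "0 < n"
  shows "0 \<le> max_miss_within n E v j" "max_miss_within n E v j \<le> 1"
  using max_miss_within_attained[OF assms] miss_within_bounds by metis+

text \<open>The Markov property in the form of an inequality: to miss v for t + s steps, the
  walk must first miss it for s steps and then, from wherever it is, for t more steps.\<close>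
lemma miss_within_add_le:
  assumes "\<forall>y<n. y \<noteq> v \<longrightarrow> 0 < deg n E y" "x < n"
  shows "miss_within n E v (t + s) x \<le> max_miss_within n E v t * miss_within n E v s x"
  using assms(2)
proof (induction s arbitrary: x)
  case 0
  have "miss_within n E v 0 x = (if x = v then 0 else 1)"
    by (simp add: miss_within_def hit_within_def)
  then show ?case
    using miss_within_le_max[OF 0] by (simp add: miss_within_target)
next
  case (Suc s)
  show ?case
  proof (cases "x = v")
    case True
    then show ?thesis by (simp add: miss_within_target)
  next
    case False
    have "(\<Sum>y\<in>nbrs n E x. miss_within n E v (t + s) y)
        \<le> max_miss_within n E v t * (\<Sum>y\<in>nbrs n E x. miss_within n E v s y)"
      unfolding sum_distrib_left by (intro sum_mono Suc.IH) (simp add: nbrs_def)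
    then show ?thesis
      using False assms(1) Suc.prems
      by (simp add: miss_within_Suc divide_right_mono mult.commute times_divide_eq_right)
  qed
qed

lemma sum_lessThan_le_of_contraction:
  fixes M :: "nat \<Rightarrow> real"
  assumes "\<And>t. 0 \<le> M t" "\<And>t. M t \<le> 1" "\<And>t. M (t + k) \<le> (1 - \<delta>) * M t"
    and "0 < \<delta>" "\<delta> \<le> 1"
  shows "(\<Sum>t<N. M t) \<le> k / \<delta>"
proof -
  have split: "(\<Sum>t<N + k. M t) = (\<Sum>t<k. M t) + (\<Sum>t<N. M (t + k))"
    by (induction N) (simp_all add: add.commute add.left_commute)
  have mono: "(\<Sum>t<N. M t) \<le> (\<Sum>t<N + k. M t)"
    by (intro sum_mono2) (auto intro: assms(1))
  have "(\<Sum>t<k. M t) \<le> k"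
    using sum_mono[of "{..<k}" M "\<lambda>_. 1"] assms(2) by simp
  moreover have "(\<Sum>t<N. M (t + k)) \<le> (1 - \<delta>) * (\<Sum>t<N + k. M t)"
  proof -
    have "(\<Sum>t<N. M (t + k)) \<le> (1 - \<delta>) * (\<Sum>t<N. M t)"
      unfolding sum_distrib_left by (intro sum_mono assms(3))
    also have "\<dots> \<le> (1 - \<delta>) * (\<Sum>t<N + k. M t)"
      using mono assms(5) by (intro mult_left_mono) auto
    finally show ?thesis .
  qed
  ultimately have "\<delta> * (\<Sum>t<N + k. M t) \<le> k"
    using split by (simp add: algebra_simps)
  then have "(\<Sum>t<N + k. M t) \<le> k / \<delta>"
    using assms(4) by (simp add: field_simps mult.commute)
  then show ?thesis
    using mono by linarith
qed

lemma hitting_time_partial_sum: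
  "(\<Sum>t<Suc N. real t * hit_prob n E v t x) =
     (\<Sum>t<N. miss_within n E v t x) - real N * miss_within n E v N x"
proof (induction N)
  case 0
  then show ?case by simp
next
  case (Suc N)
  have "(\<Sum>t<Suc (Suc N). real t * hit_prob n E v t x) =
      (\<Sum>t<Suc N. real t * hit_prob n E v t x) + real (Suc N) * hit_prob n E v (Suc N) x"
    by (simp only: sum.lessThan_Suc)
  also have "\<dots> = (\<Sum>t<N. miss_within n E v t x) - real N * miss_within n E v N x
      + real (Suc N) * (miss_within n E v N x - miss_within n E v (Suc N) x)"
    by (simp only: Suc.IH hit_prob_Suc_eq_miss_within_diff)
  also have "\<dots> = (\<Sum>t<Suc N. miss_within n E v t x) - real (Suc N) * miss_within n E v (Suc N) x"
    by (simp add: algebra_simps)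
  finally show ?case .
qed

lemma deg_pos_if_diam_le:
  assumes "diam_le n E k" "x < n" "v < n" "x \<noteq> v"
  shows "0 < deg n E x"
proof -
  have "x = v \<or> (\<exists>y<n. E x y)" if "within_dist n E j x v" for j
    using that by (induction j arbitrary: x) auto
  then obtain y where "y < n" "E x y"
    using assms unfolding diam_le_def by blast
  then have "y \<in> nbrs n E x"
    by (simp add: nbrs_def)
  then show ?thesis
    unfolding deg_def using finite_nbrs card_gt_0_iff by blast
qed

lemma max_miss_within_contracts:
  assumes "diam_le n E k" "v < n" "1 \<le> D" "\<forall>y<n. real (deg n E y) \<le> D"
  shows "max_miss_within n E v (t + k) \<le> (1 - 1 / D ^ k) * max_miss_within n E v t"
proof -
  have "0 < n" using assms(2) by simp
  obtain y where y: "y < n" "max_miss_within n E v (t + k) = miss_within n E v (t + k) y"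
    using max_miss_within_attained[OF \<open>0 < n\<close>] by blast
  have "miss_within n E v k y \<le> 1 - 1 / D ^ k"
    using hit_within_ge[OF assms(3,4)] assms(1,2) y(1)
    by (simp add: miss_within_def diam_le_def)
  then have "max_miss_within n E v t * miss_within n E v k y
      \<le> max_miss_within n E v t * (1 - 1 / D ^ k)"
    using max_miss_within_bounds[OF \<open>0 < n\<close>] by (intro mult_left_mono) auto
  moreover have "max_miss_within n E v (t + k) \<le> max_miss_within n E v t * miss_within n E v k y"
    using miss_within_add_le[OF _ y(1)] deg_pos_if_diam_le[OF assms(1) _ assms(2)] y(2) by simp
  ultimately show ?thesis
    by (simp add: mult.commute)
qed

lemma hitting_time_partial_sum_le:
  assumes "diam_le n E k" "v < n" "x < n" "1 \<le> D" "\<forall>y<n. real (deg n E y) \<le> D"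
  shows "(\<Sum>t<N. real t * hit_prob n E v t x) \<le> k * D ^ k"
proof (cases N)
  case 0
  then show ?thesis
    using one_le_power[OF assms(4), of k] by simp
next
  case (Suc m)
  have "(\<Sum>t<m. miss_within n E v t x) \<le> (\<Sum>t<m. max_miss_within n E v t)"
    by (intro sum_mono miss_within_le_max assms(3))
  also have "\<dots> \<le> k / (1 / D ^ k)"
    using assms max_miss_within_bounds[of n E v] one_le_power[OF assms(4), of k]
    by (intro sum_lessThan_le_of_contraction max_miss_within_contracts) auto
  finally have "(\<Sum>t<m. miss_within n E v t x) \<le> k * D ^ k"
    by simp
  moreover have "0 \<le> real m * miss_within n E v m x"
    using miss_within_bounds(1) by simp
  ultimately show ?thesis
    unfolding Suc using hitting_time_partial_sum[of n E v x m] by linarith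
qed

lemma deg_le_card: "deg n E x \<le> n"
  unfolding deg_def nbrs_def using card_mono[of "{..<n}" "{u. u < n \<and> E x u}"] by auto

lemma summable_hitting_time:
  assumes "diam_le n E k" "v < n" "x < n"
  shows "summable (\<lambda>t. real t * hit_prob n E v t x)"
proof (rule summableI_nonneg_bounded)
  show "(\<Sum>t<N. real t * hit_prob n E v t x) \<le> k * real n ^ k" for N
    using hitting_time_partial_sum_le[OF assms, of "real n"] assms(3) deg_le_card by simp
qed (simp add: hit_prob_nonneg)

lemma hitting_time_nonneg:
  assumes "diam_le n E k" "v < n" "x < n"
  shows "0 \<le> hitting_time n E x v"
  unfolding hitting_time_def
  using summable_hitting_time[OF assms] by (intro suminf_nonneg) (simp_all add: hit_prob_nonneg)

lemma hitting_time_le: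
  assumes "diam_le n E k" "v < n" "x < n" "1 \<le> D" "\<forall>y<n. real (deg n E y) \<le> D"
  shows "hitting_time n E x v \<le> k * D ^ k"
  unfolding hitting_time_def
  using suminf_le_const[OF summable_hitting_time[OF assms(1-3)]]
    hitting_time_partial_sum_le[OF assms] by blast

lemma powr_inverse_power:
  assumes "0 < k" "0 \<le> x"
  shows "(x powr (1 / real k)) ^ k = x"
  using assms by (simp add: powr_inverse_root)

lemma powr_inverse_mult_ln_le_density:
  assumes "0 < k" "0 < n" "ln n / real n powr ((real k - 1) / real k) \<le> p"
  shows "real n powr (1 / real k) * ln n \<le> p * n"
proof -
  have "1 / real k = 1 - (real k - 1) / real k"
    using assms(1) by (simp add: field_simps)
  then have "real n powr (1 / real k) = real n / real n powr ((real k - 1) / real k)"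
    using assms(2) by (simp add: powr_diff)
  then show ?thesis
    using mult_right_mono[OF assms(3), of "real n"] by (simp add: mult.commute)
qed

lemma density_lower_bounds:
  assumes "0 < k" "3 \<le> n" "ln n / real n powr ((real k - 1) / real k) \<le> p"
  shows "1 \<le> p * n" "real n \<le> (p * n) ^ k"
proof -
  define r where "r = real n powr (1 / real k)"
  have "1 \<le> ln (real n)"
    using assms(2) exp_le by (subst ln_ge_iff) linarith+
  moreover have "1 \<le> r"
    unfolding r_def using assms(1,2) by (intro ge_one_powr_ge_zero) auto
  moreover have "r * ln n \<le> p * n"
    unfolding r_def using powr_inverse_mult_ln_le_density assms by simp
  ultimately have "r \<le> p * n"
    by (smt (verit) mult_le_cancel_left1)
  then show "1 \<le> p * n" "real n \<le> (p * n) ^ k"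
    using \<open>1 \<le> r\<close> powr_inverse_power[OF assms(1), of "real n"] power_mono[of r "p * n" k]
    unfolding r_def by auto
qed

lemma mult_sqrt_le_of_sq_mult_le:
  fixes C L P :: real
  assumes "C\<^sup>2 * L \<le> P" "0 \<le> L" "0 \<le> P"
  shows "C * sqrt (P * L) \<le> P"
proof -
  have "C * sqrt (P * L) \<le> sqrt (C\<^sup>2 * L * P)"
    using assms(2,3) by (simp add: real_sqrt_mult mult_ac mult_right_mono)
  also have "\<dots> \<le> sqrt (P * P)"
    using assms by (intro real_sqrt_le_mono mult_right_mono) auto
  finally show ?thesis
    using assms(3) by simp
qed

lemma sqrt_deviation_le_density:
  assumes "0 < k" "3 \<le> n" "(C\<^sup>2) ^ k \<le> real n"
    and "ln n / real n powr ((real k - 1) / real k) \<le> p"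
  shows "C * sqrt (p * n * ln n) \<le> p * n"
proof (rule mult_sqrt_le_of_sq_mult_le)
  have "C\<^sup>2 \<le> real n powr (1 / real k)"
    using assms(1,3) powr_inverse_power[OF assms(1), of "real n"]
    by (metis power_mono_iff of_nat_0_le_iff powr_ge_zero zero_le_power2)
  then have "C\<^sup>2 * ln n \<le> real n powr (1 / real k) * ln n"
    using assms(2) by (intro mult_right_mono) auto
  also have "\<dots> \<le> p * n"
    using powr_inverse_mult_ln_le_density[OF assms(1) _ assms(4)] assms(2) by simp
  finally show "C\<^sup>2 * ln n \<le> p * n" .
  show "0 \<le> ln (real n)" "0 \<le> p * n"
    using assms(2) density_lower_bounds[OF assms(1,2,4)] by auto
qed

theorem corollary4p3:
  fixes k :: nat and p :: "nat \<Rightarrow> real" and c C :: real and eps :: "nat \<Rightarrow> real"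
  assumes "k \<ge> 2"
    and "c > 0"
    and "\<forall>\<^sub>F n in sequentially.
           ln n / real n powr ((real k - 1) / real k) \<le> p n
           \<and> p n \<le> 1 - c * (ln n)^4 / n"
    and "eps \<longlonglongrightarrow> 0"
  shows "\<exists>K. \<forall>\<^sub>F n in sequentially. \<forall>E v w.
           graph_class k n (p n) C (eps n) E \<longrightarrow> v < n \<longrightarrow> w < n \<longrightarrow> v \<noteq> w \<longrightarrow>
           \<bar>hitting_time n E w v - real n\<bar> \<le> K * (p n * real n) ^ k"
proof -
  have "0 < k"
    using assms(1) by simp
  have "\<forall>\<^sub>F n in sequentially. 3 \<le> n \<and> (C\<^sup>2) ^ k \<le> real n
          \<and> ln n / real n powr ((real k - 1) / real k) \<le> p n"
    using assms(3) eventually_ge_at_top[of 3]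
      filterlim_real_sequentially[unfolded filterlim_at_top, rule_format, of "(C\<^sup>2) ^ k"]
    by eventually_elim auto
  then show ?thesis
  proof (intro exI[of _ "real k * 2 ^ k + 1"], eventually_elim, intro allI impI)
    fix n E v w
    assume n: "3 \<le> n \<and> (C\<^sup>2) ^ k \<le> real n \<and> ln n / real n powr ((real k - 1) / real k) \<le> p n"
      and G: "graph_class k n (p n) C (eps n) E" and "v < n" "w < n"
    define P where "P = p n * real n"
    have P: "1 \<le> P" "real n \<le> P ^ k"
      using density_lower_bounds[OF \<open>0 < k\<close>] n unfolding P_def by auto
    have diam: "diam_le n E k" and deg: "\<forall>x<n. real (deg n E x) \<le> 2 * P"
      using G sqrt_deviation_le_density[OF \<open>0 < k\<close>, of n C "p n"] n
      unfolding graph_class_def P_def by (auto simp: abs_le_iff)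
    have "0 \<le> hitting_time n E w v" "hitting_time n E w v \<le> k * (2 * P) ^ k"
      using hitting_time_nonneg hitting_time_le[OF _ _ _ _ deg] diam \<open>v < n\<close> \<open>w < n\<close> P(1)
      by auto
    then show "\<bar>hitting_time n E w v - real n\<bar> \<le> (real k * 2 ^ k + 1) * (p n * real n) ^ k"
      using P(2) unfolding P_def[symmetric] by (simp add: power_mult_distrib abs_le_iff algebra_simps)
  qed
qed

end
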